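(* Let $\bm{Q}$ be the $m\times m$ transition rate matrix ($Q_{ij}\ge 0$ for $i\ne j$, $Q_{ii}=-\sum_{j\ne i}Q_{ij}$) of an irreducible, reversible continuous-time Markov chain with (elementwise positive) stationary distribution $\bm{\pi}_\infty$, so that $(\bm{\pi}_\infty)_iQ_{ij}=(\bm{\pi}_\infty)_jQ_{ji}$ for all $i,j$. For row vectors $\bm{p},\bm{q}\in\mathbb{R}^m$ define $\langle\bm{p},\bm{q}\rangle_{\bm{\pi}_\infty}=\sum_i (\bm{p})_i(\bm{q})_i/(\bm{\pi}_\infty)_i$, $\|\bm{p}\|^2_{\bm{\pi}_\infty}=\langle\bm{p},\bm{p}\rangle_{\bm{\pi}_\infty}$, and $\Phi^-(\bm{p})=-\tfrac12\langle\bm{p}\bm{Q},\bm{p}\rangle_{\bm{\pi}_\infty}$. Given $\bm{p}_{k-1}^{+}\in\Delta^{m-1}$ and a step size $\lambda>0$, let $$\bm{p}_k^{-}(\lambda)=\underset{\bm{p}\in\Delta^{m-1}}{\arg\inf}\;\tfrac12\|\bm{p}-\bm{p}_{k-1}^{+}\|^2_{\bm{\pi}_\infty}+\lambda\Phi^-(\bm{p}).$$ Then $\bm{p}_k^{-}(\lambda)$ is a $\lambda$-approximate prior: it coincides with the exact prior propagation $\bm{p}_{k-1}^{+}\exp(\lambda\bm{Q})$ (the solution at time $\lambda$ of $\dot{\bm{\pi}}^-=\bm{\pi}^-\bm{Q}$ started at $\bm{p}_{k-1}^+$) up to $o(\lambda)$ as $\lambda\downarrow0$.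
   Context: $\Delta^{m-1}=\{\bm{\pi}\in\mathbb{R}^m_{\ge 0}:\bm{\pi}\mathbf{1}=1\}$ is the probability simplex of row vectors ($\mathbf{1}$ the column vector of ones). In the filtering setting, $\bm{p}_{k-1}^+$ is the approximate posterior at time $(k-1)\lambda$ and $\bm{p}_k^-$ is the approximate prior at time $k\lambda$. *)

theory Defs
  imports "HOL-Analysis.Analysis"
begin

text \<open>Matrices are \<open>real^'n^'n\<close> (rows indexed first), row vectors are \<open>real^'n\<close>,
  and the row-vector/matrix product \<open>p Q\<close> is \<open>p v* Q\<close>.\<close>

fun mat_pow :: "real^'n^'n \<Rightarrow> nat \<Rightarrow> real^'n^'n" where
  "mat_pow A 0 = mat 1"
| "mat_pow A (Suc k) = mat_pow A k ** A"

definition mat_exp :: "real^'n^'n \<Rightarrow> real^'n^'n" where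
  "mat_exp A = (\<Sum>k. (1 / fact k) *\<^sub>R mat_pow A k)"

definition prob_simplex :: "(real^'n) set" where
  "prob_simplex = {p. (\<forall>i. 0 \<le> p $ i) \<and> (\<Sum>i\<in>UNIV. p $ i) = 1}"

definition rate_matrix :: "real^'n^'n \<Rightarrow> bool" where
  "rate_matrix Q \<longleftrightarrow> (\<forall>i j. i \<noteq> j \<longrightarrow> 0 \<le> Q $ i $ j) \<and>
     (\<forall>i. Q $ i $ i = - (\<Sum>j\<in>UNIV - {i}. Q $ i $ j))"

definition irreducible_chain :: "real^'n^'n \<Rightarrow> bool" where
  "irreducible_chain Q \<longleftrightarrow> (\<forall>i j. (i, j) \<in> {(a, b). a \<noteq> b \<and> 0 < Q $ a $ b}\<^sup>*)"

definition stationary_dist :: "real^'n^'n \<Rightarrow> real^'n \<Rightarrow> bool" where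
  "stationary_dist Q \<pi> \<longleftrightarrow> (\<forall>i. 0 < \<pi> $ i) \<and> (\<Sum>i\<in>UNIV. \<pi> $ i) = 1 \<and> \<pi> v* Q = 0"

definition reversible_wrt :: "real^'n^'n \<Rightarrow> real^'n \<Rightarrow> bool" where
  "reversible_wrt Q \<pi> \<longleftrightarrow> (\<forall>i j. \<pi> $ i * Q $ i $ j = \<pi> $ j * Q $ j $ i)"

definition pi_inner :: "real^'n \<Rightarrow> real^'n \<Rightarrow> real^'n \<Rightarrow> real" where
  "pi_inner \<pi> p q = (\<Sum>i\<in>UNIV. p $ i * q $ i / \<pi> $ i)"

definition pi_norm_sq :: "real^'n \<Rightarrow> real^'n \<Rightarrow> real" where
  "pi_norm_sq \<pi> p = pi_inner \<pi> p p"

definition Phi_minus :: "real^'n^'n \<Rightarrow> real^'n \<Rightarrow> real^'n \<Rightarrow> real" where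
  "Phi_minus Q \<pi> p = - (1/2) * pi_inner \<pi> (p v* Q) p"

definition prior_objective :: "real^'n^'n \<Rightarrow> real^'n \<Rightarrow> real^'n \<Rightarrow> real \<Rightarrow> real^'n \<Rightarrow> real" where
  "prior_objective Q \<pi> p0 lam p = (1/2) * pi_norm_sq \<pi> (p - p0) + lam * Phi_minus Q \<pi> p"

definition is_prior_minimizer ::
  "real^'n^'n \<Rightarrow> real^'n \<Rightarrow> real^'n \<Rightarrow> real \<Rightarrow> real^'n \<Rightarrow> bool" where
  "is_prior_minimizer Q \<pi> p0 lam p \<longleftrightarrow> p \<in> prob_simplex \<and>
     (\<forall>q\<in>prob_simplex. prior_objective Q \<pi> p0 lam p \<le> prior_objective Q \<pi> p0 lam q)"

end

theory Submission
  imports Defs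
begin

text \<open>
  Let \<open>q = p0 + \<lambda> p0 Q\<close> be the explicit Euler step; for small \<open>\<lambda>\<close> it lies in the
  simplex because \<open>Q\<close> is a rate matrix. Reversibility makes \<open>v \<mapsto> v Q\<close> self-adjoint for
  \<open>\<langle>_, _\<rangle>\<^sub>\<pi>\<close>, so writing the minimizer as \<open>q + d\<close>, the objective \<open>F\<close> satisfies
  \<open>F (q + d) - F q = \<parallel>d\<parallel>\<^sub>\<pi>\<^sup>2 / 2 - \<lambda>\<^sup>2 \<langle>p0 Q\<^sup>2, d\<rangle>\<^sub>\<pi> - (\<lambda>/2) \<langle>d Q, d\<rangle>\<^sub>\<pi>\<close>.
  Minimality makes this nonpositive, and for small \<open>\<lambda>\<close> the last term is absorbed into the
  first, leaving \<open>\<parallel>d\<parallel> = O(\<lambda>\<^sup>2)\<close>. The tail of the exponential series gives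
  \<open>p0 exp(\<lambda> Q) - q = O(\<lambda>\<^sup>2)\<close> as well.
\<close>

definition entrywise_l1 :: "real^'n^'m \<Rightarrow> real" where
  "entrywise_l1 A = (\<Sum>i\<in>UNIV. \<Sum>j\<in>UNIV. \<bar>A $ i $ j\<bar>)"

lemma entrywise_l1_nonneg: "0 \<le> entrywise_l1 A"
  unfolding entrywise_l1_def by (intro sum_nonneg) auto

lemma abs_entry_le_entrywise_l1: "\<bar>A $ i $ j\<bar> \<le> entrywise_l1 A"
proof -
  have "\<bar>A $ i $ j\<bar> \<le> (\<Sum>j\<in>UNIV. \<bar>A $ i $ j\<bar>)"
    by (rule member_le_sum) auto
  also have "\<dots> \<le> entrywise_l1 A"
    unfolding entrywise_l1_def
    by (rule member_le_sum[of _ UNIV "\<lambda>i. \<Sum>j\<in>UNIV. \<bar>A $ i $ j\<bar>"]) (auto intro: sum_nonneg)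
  finally show ?thesis .
qed

lemma norm_vector_matrix_mult_le: "norm (x v* (A::real^'n^'m)) \<le> entrywise_l1 A * norm x"
proof -
  have "onorm ((*v) (transpose A)) \<le> (\<Sum>i\<in>UNIV. \<Sum>j\<in>UNIV. \<bar>transpose A $ i $ j\<bar>)"
    by (rule onorm_le_matrix_component_sum)
  also have "\<dots> = entrywise_l1 A"
    unfolding entrywise_l1_def by (simp add: transpose_def) (rule sum.swap)
  finally have "onorm ((*v) (transpose A)) * norm x \<le> entrywise_l1 A * norm x"
    by (simp add: mult_right_mono)
  moreover have "norm (transpose A *v x) \<le> onorm ((*v) (transpose A)) * norm x"
    by (intro onorm matrix_vector_mul_bounded_linear)
  ultimately show ?thesis by simp
qed

lemma norm_vector_mat_pow_le: "norm (x v* mat_pow A k) \<le> entrywise_l1 A ^ k * norm x"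
proof (induction k)
  case (Suc k)
  have "norm (x v* mat_pow A (Suc k)) = norm ((x v* mat_pow A k) v* A)"
    by (simp add: vector_matrix_mul_assoc)
  also have "\<dots> \<le> entrywise_l1 A * norm (x v* mat_pow A k)"
    by (rule norm_vector_matrix_mult_le)
  also have "\<dots> \<le> entrywise_l1 A * (entrywise_l1 A ^ k * norm x)"
    by (intro mult_left_mono Suc entrywise_l1_nonneg)
  finally show ?case by (simp add: mult_ac)
qed simp

lemma norm_mat_pow_le: "norm (mat_pow A k) \<le> real CARD('n) * entrywise_l1 (A::real^'n^'n) ^ k"
proof -
  have row: "mat_pow A k $ i = axis i 1 v* mat_pow A k" for i
    by (simp add: vec_eq_iff vector_matrix_mult_def axis_def if_distrib[of "\<lambda>c. c * _"]
        cong: if_cong)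
  have "norm (mat_pow A k) \<le> (\<Sum>i\<in>UNIV. norm (mat_pow A k $ i))"
    by (simp add: norm_vec_def L2_set_le_sum)
  also have "\<dots> \<le> (\<Sum>i\<in>(UNIV::'n set). entrywise_l1 A ^ k)"
    unfolding row using norm_vector_mat_pow_le[of "axis _ 1" A k]
    by (intro sum_mono) simp
  finally show ?thesis by simp
qed

lemma mat_pow_scaleR: "mat_pow (c *\<^sub>R A) k = (c ^ k) *\<^sub>R mat_pow A k"
  by (induction k) (simp_all add: matrix_scalar_ac scalar_matrix_assoc[symmetric])

lemma vector_matrix_mult_scaleR_right: "x v* (c *\<^sub>R A) = c *\<^sub>R (x v* (A::real^'n^'m))"
  by (simp add: vector_matrix_mult_def vec_eq_iff sum_distrib_left mult_ac)

lemma vector_matrix_mult_scaleR_left: "(c *\<^sub>R x) v* A = c *\<^sub>R (x v* (A::real^'n^'m))"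
  by (simp add: vector_matrix_mult_def vec_eq_iff sum_distrib_left mult_ac)

lemma bounded_linear_vector_matrix_mult_right: "bounded_linear (\<lambda>A::real^'n^'m. x v* A)"
proof -
  have "linear (\<lambda>A. x v* A)"
    by (intro linearI) (simp_all add: vector_matrix_mult_def vec_eq_iff sum.distrib
        sum_distrib_left algebra_simps)
  then show ?thesis using linear_conv_bounded_linear by blast
qed

lemma sums_vector_mat_exp:
  fixes A :: "real^'n^'n"
  shows "(\<lambda>k. (t ^ k / fact k) *\<^sub>R (x v* mat_pow A k)) sums (x v* mat_exp (t *\<^sub>R A))"
proof -
  let ?K = "entrywise_l1 A"
  have "summable (\<lambda>k. (1 / fact k) *\<^sub>R mat_pow (t *\<^sub>R A) k)"
  proof (rule summable_comparison_test')
    show "summable (\<lambda>k. real CARD('n) * ((\<bar>t\<bar> * ?K) ^ k /\<^sub>R fact k))"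
      by (intro summable_mult summable_exp_generic)
    show "norm ((1 / fact k) *\<^sub>R mat_pow (t *\<^sub>R A) k)
        \<le> real CARD('n) * ((\<bar>t\<bar> * ?K) ^ k /\<^sub>R fact k)" for k
    proof -
      have "norm ((1 / fact k) *\<^sub>R mat_pow (t *\<^sub>R A) k)
          = \<bar>t\<bar> ^ k / fact k * norm (mat_pow A k)"
        by (simp add: mat_pow_scaleR power_abs)
      also have "\<dots> \<le> \<bar>t\<bar> ^ k / fact k * (real CARD('n) * ?K ^ k)"
        by (intro mult_left_mono norm_mat_pow_le) simp
      finally show ?thesis by (simp add: power_mult_distrib divide_inverse mult_ac)
    qed
  qed
  then have "(\<lambda>k. x v* ((1 / fact k) *\<^sub>R mat_pow (t *\<^sub>R A) k)) sums (x v* mat_exp (t *\<^sub>R A))"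
    unfolding mat_exp_def
    by (intro bounded_linear.sums[OF bounded_linear_vector_matrix_mult_right] summable_sums)
  then show ?thesis
    by (simp add: vector_matrix_mult_scaleR_right mat_pow_scaleR)
qed

lemma norm_vector_mat_exp_remainder_le:
  fixes A :: "real^'n^'n"
  assumes "0 \<le> t"
  shows "norm (x v* mat_exp (t *\<^sub>R A) - x - t *\<^sub>R (x v* A))
    \<le> (exp (t * entrywise_l1 A) - 1 - t * entrywise_l1 A) * norm x"
proof -
  let ?s = "t * entrywise_l1 A"
  let ?a = "\<lambda>k. (t ^ k / fact k) *\<^sub>R (x v* mat_pow A k)"
  let ?b = "\<lambda>k. ?s ^ k /\<^sub>R fact k * norm x"
  have tail: "(\<lambda>k. ?a (k + 2)) sums (x v* mat_exp (t *\<^sub>R A) - x - t *\<^sub>R (x v* A))"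
    using sums_split_initial_segment[OF sums_vector_mat_exp, where n=2]
    by (simp add: numeral_2_eq_2 diff_diff_eq)
  have remainder: "(\<lambda>k. ?b (k + 2)) sums ((exp ?s - 1 - ?s) * norm x)"
    using sums_split_initial_segment[OF sums_mult2[OF exp_converges, of ?s "norm x"], of 2]
    by (simp add: numeral_2_eq_2 algebra_simps)
  have termwise: "norm (?a k) \<le> ?b k" for k
  proof -
    have "norm (?a k) = t ^ k / fact k * norm (x v* mat_pow A k)"
      using assms by simp
    also have "\<dots> \<le> t ^ k / fact k * (entrywise_l1 A ^ k * norm x)"
      by (intro mult_left_mono norm_vector_mat_pow_le) (use assms in simp)
    finally show ?thesis by (simp add: power_mult_distrib divide_inverse mult_ac)
  qed
  have "norm (suminf (\<lambda>k. ?a (k + 2))) \<le> suminf (\<lambda>k. ?b (k + 2))"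
    by (rule norm_suminf_le[OF termwise sums_summable[OF remainder]])
  then show ?thesis
    by (simp only: sums_unique[OF tail, symmetric] sums_unique[OF remainder, symmetric])
qed

lemma rate_matrix_row_sum:
  assumes "rate_matrix Q"
  shows "(\<Sum>j\<in>UNIV. Q $ i $ j) = 0"
proof -
  have "(\<Sum>j\<in>UNIV. Q $ i $ j) = Q $ i $ i + (\<Sum>j\<in>UNIV - {i}. Q $ i $ j)"
    by (rule sum.remove) auto
  then show ?thesis using assms unfolding rate_matrix_def by simp
qed

lemma euler_step_in_prob_simplex:
  assumes Q: "rate_matrix Q" and p: "p \<in> prob_simplex"
    and t: "0 \<le> t" "\<And>i. t * \<bar>Q $ i $ i\<bar> \<le> 1"
  shows "p + t *\<^sub>R (p v* Q) \<in> prob_simplex"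
proof -
  have p_nonneg: "\<And>i. 0 \<le> p $ i" and p_sum: "(\<Sum>i\<in>UNIV. p $ i) = 1"
    using p unfolding prob_simplex_def by auto
  have "0 \<le> (p + t *\<^sub>R (p v* Q)) $ i" for i
  proof -
    have "(p + t *\<^sub>R (p v* Q)) $ i
        = p $ i * (1 + t * Q $ i $ i) + t * (\<Sum>j\<in>UNIV - {i}. p $ j * Q $ j $ i)"
      unfolding vector_matrix_mult_def by (simp add: sum.remove algebra_simps)
    moreover have "0 \<le> (\<Sum>j\<in>UNIV - {i}. p $ j * Q $ j $ i)"
      using Q p_nonneg unfolding rate_matrix_def by (intro sum_nonneg) auto
    moreover have "0 \<le> 1 + t * Q $ i $ i"
      using t(2)[of i] mult_left_mono[OF abs_ge_minus_self[of "Q $ i $ i"] t(1)]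
      by simp
    ultimately show ?thesis using p_nonneg t by simp
  qed
  moreover have "(\<Sum>i\<in>UNIV. (p v* Q) $ i) = 0"
  proof -
    have "(\<Sum>i\<in>UNIV. (p v* Q) $ i) = (\<Sum>j\<in>UNIV. p $ j * (\<Sum>i\<in>UNIV. Q $ j $ i))"
      unfolding vector_matrix_mult_def by (simp add: sum_distrib_left) (rule sum.swap)
    then show ?thesis using rate_matrix_row_sum[OF Q] by simp
  qed
  then have "(\<Sum>i\<in>UNIV. (p + t *\<^sub>R (p v* Q)) $ i) = 1"
    using p_sum by (simp add: sum.distrib sum_distrib_left[symmetric])
  ultimately show ?thesis unfolding prob_simplex_def by auto
qed

lemma pi_inner_add_left: "pi_inner \<pi> (a + b) c = pi_inner \<pi> a c + pi_inner \<pi> b c"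
  unfolding pi_inner_def by (simp add: distrib_right add_divide_distrib sum.distrib)

lemma pi_inner_add_right: "pi_inner \<pi> a (b + c) = pi_inner \<pi> a b + pi_inner \<pi> a c"
  unfolding pi_inner_def by (simp add: distrib_left add_divide_distrib sum.distrib)

lemma pi_inner_scaleR_left: "pi_inner \<pi> (r *\<^sub>R a) c = r * pi_inner \<pi> a c"
  unfolding pi_inner_def by (simp add: sum_distrib_left mult_ac)

lemma pi_inner_scaleR_right: "pi_inner \<pi> a (r *\<^sub>R c) = r * pi_inner \<pi> a c"
  unfolding pi_inner_def by (simp add: sum_distrib_left mult_ac)

lemma pi_inner_commute: "pi_inner \<pi> a b = pi_inner \<pi> b a"
  unfolding pi_inner_def by (simp add: mult_ac)

lemma pi_inner_vector_matrix_mult_swap: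
  assumes rev: "reversible_wrt Q \<pi>" and pos: "\<And>i. 0 < \<pi> $ i"
  shows "pi_inner \<pi> (x v* Q) y = pi_inner \<pi> (y v* Q) x"
proof -
  have detailed_balance: "Q $ j $ i / \<pi> $ i = Q $ i $ j / \<pi> $ j" for i j
    using rev pos[of i] pos[of j] unfolding reversible_wrt_def
    by (metis (no_types) divide_divide_eq_left frac_eq_eq less_irrefl mult.commute)
  have "pi_inner \<pi> (x v* Q) y = (\<Sum>i\<in>UNIV. \<Sum>j\<in>UNIV. x $ j * y $ i * (Q $ j $ i / \<pi> $ i))"
    unfolding pi_inner_def vector_matrix_mult_def
    by (simp add: sum_distrib_left sum_distrib_right sum_divide_distrib mult_ac)
  also have "\<dots> = (\<Sum>i\<in>UNIV. \<Sum>j\<in>UNIV. x $ j * y $ i * (Q $ i $ j / \<pi> $ j))"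
    by (simp only: detailed_balance)
  also have "\<dots> = (\<Sum>j\<in>UNIV. \<Sum>i\<in>UNIV. x $ j * y $ i * (Q $ i $ j / \<pi> $ j))"
    by (rule sum.swap)
  also have "\<dots> = pi_inner \<pi> (y v* Q) x"
    unfolding pi_inner_def vector_matrix_mult_def
    by (simp add: sum_distrib_left sum_distrib_right sum_divide_distrib mult_ac)
  finally show ?thesis .
qed

lemma norm_sq_le_pi_inner:
  assumes "\<And>i. 0 < \<pi> $ i" "\<And>i. \<pi> $ i \<le> 1"
  shows "(norm d)\<^sup>2 \<le> pi_inner \<pi> d d"
proof -
  have "(norm d)\<^sup>2 = (\<Sum>i\<in>UNIV. d $ i * d $ i)"
    by (simp add: power2_norm_eq_inner inner_vec_def)
  also have "\<dots> \<le> pi_inner \<pi> d d"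
    unfolding pi_inner_def using assms
    by (intro sum_mono) (simp add: le_divide_eq mult_left_le)
  finally show ?thesis .
qed

lemma abs_pi_inner_le:
  assumes "\<And>i. 0 < \<pi> $ i"
  shows "\<bar>pi_inner \<pi> a b\<bar> \<le> (\<Sum>i\<in>UNIV. 1 / \<pi> $ i) * norm a * norm b"
proof -
  have "\<bar>pi_inner \<pi> a b\<bar> \<le> (\<Sum>i\<in>UNIV. \<bar>a $ i * b $ i / \<pi> $ i\<bar>)"
    unfolding pi_inner_def by (rule sum_abs)
  also have "\<dots> \<le> (\<Sum>i\<in>UNIV. 1 / \<pi> $ i * (norm a * norm b))"
  proof (rule sum_mono)
    fix i
    have "\<bar>a $ i * b $ i\<bar> \<le> norm a * norm b"
      unfolding abs_mult by (intro mult_mono component_le_norm_cart) auto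
    then show "\<bar>a $ i * b $ i / \<pi> $ i\<bar> \<le> 1 / \<pi> $ i * (norm a * norm b)"
      using assms[of i] by (simp add: divide_right_mono)
  qed
  finally show ?thesis by (simp add: sum_distrib_right mult.assoc)
qed

lemma prior_objective_euler_step_perturbation:
  assumes rev: "reversible_wrt Q \<pi>" and pos: "\<And>i. 0 < \<pi> $ i"
    and q: "q = p0 + t *\<^sub>R (p0 v* Q)"
  shows "prior_objective Q \<pi> p0 t (q + d) - prior_objective Q \<pi> p0 t q
    = (1/2) * pi_inner \<pi> d d - t\<^sup>2 * pi_inner \<pi> (p0 v* Q v* Q) d
      - (t/2) * pi_inner \<pi> (d v* Q) d"
proof -
  define w where "w = p0 v* Q"
  define g where "g = w v* Q"
  have swap: "pi_inner \<pi> (d v* Q) p0 = pi_inner \<pi> w d"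
    "pi_inner \<pi> (d v* Q) w = pi_inner \<pi> g d"
    unfolding w_def g_def by (rule pi_inner_vector_matrix_mult_swap[OF rev pos])+
  have shifted: "q + d - p0 = t *\<^sub>R w + d" "q - p0 = t *\<^sub>R w"
    "(q + d) v* Q = w + t *\<^sub>R g + d v* Q" "q v* Q = w + t *\<^sub>R g"
    unfolding q w_def g_def
    by (simp_all add: vector_matrix_left_distrib vector_matrix_mult_scaleR_left)
  show ?thesis
    unfolding prior_objective_def Phi_minus_def pi_norm_sq_def shifted
    unfolding q w_def[symmetric] g_def[symmetric]
    by (simp add: pi_inner_add_left pi_inner_add_right pi_inner_scaleR_left
        pi_inner_scaleR_right swap pi_inner_commute[of \<pi> d w] pi_inner_commute[of \<pi> d g]
        algebra_simps power2_eq_square)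
qed

lemma norm_prior_minimizer_diff_euler_step_le:
  fixes Q :: "real^'n^'n" and \<pi> p0 p :: "real^'n"
  defines "R \<equiv> \<Sum>i\<in>UNIV. 1 / \<pi> $ i"
  assumes rev: "reversible_wrt Q \<pi>" and pos: "\<And>i. 0 < \<pi> $ i" and le1: "\<And>i. \<pi> $ i \<le> 1"
    and euler: "p0 + t *\<^sub>R (p0 v* Q) \<in> prob_simplex"
    and min: "is_prior_minimizer Q \<pi> p0 t p"
    and t: "0 < t" "2 * t * entrywise_l1 Q * R \<le> 1"
  shows "norm (p - (p0 + t *\<^sub>R (p0 v* Q))) \<le> 4 * t\<^sup>2 * R * norm (p0 v* Q v* Q)"
proof -
  define q where "q = p0 + t *\<^sub>R (p0 v* Q)"
  define d where "d = p - q"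
  define n where "n = norm d"
  let ?g = "p0 v* Q v* Q"
  have R_nonneg: "0 \<le> R" unfolding R_def using pos by (intro sum_nonneg) (simp add: less_imp_le)
  have "prior_objective Q \<pi> p0 t (q + d) \<le> prior_objective Q \<pi> p0 t q"
    using min euler unfolding is_prior_minimizer_def d_def q_def by auto
  then have "(1/2) * pi_inner \<pi> d d \<le> t\<^sup>2 * pi_inner \<pi> ?g d + (t/2) * pi_inner \<pi> (d v* Q) d"
    using prior_objective_euler_step_perturbation[OF rev pos q_def, of d] by simp
  moreover have "n\<^sup>2 \<le> pi_inner \<pi> d d"
    unfolding n_def by (rule norm_sq_le_pi_inner[OF pos le1])
  moreover have "t\<^sup>2 * pi_inner \<pi> ?g d \<le> t\<^sup>2 * (R * norm ?g * n)"
    using abs_pi_inner_le[OF pos, of ?g d] unfolding R_def n_def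
    by (intro mult_left_mono) auto
  moreover have "(t/2) * pi_inner \<pi> (d v* Q) d \<le> (1/4) * n\<^sup>2"
  proof -
    have "pi_inner \<pi> (d v* Q) d \<le> R * norm (d v* Q) * n"
      using abs_pi_inner_le[OF pos, of "d v* Q" d] unfolding R_def n_def by linarith
    also have "\<dots> \<le> R * (entrywise_l1 Q * n) * n"
      unfolding n_def
      by (intro mult_right_mono mult_left_mono norm_vector_matrix_mult_le) (simp_all add: R_nonneg)
    finally have "pi_inner \<pi> (d v* Q) d \<le> R * (entrywise_l1 Q * n) * n" .
    then have "(t/2) * pi_inner \<pi> (d v* Q) d \<le> (2 * t * entrywise_l1 Q * R) * (n\<^sup>2 / 4)"
      using t(1) by (simp add: mult_left_mono power2_eq_square mult_ac)
    also have "\<dots> \<le> n\<^sup>2 / 4"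
      using mult_right_mono[OF t(2), of "n\<^sup>2 / 4"] by simp
    finally show ?thesis by simp
  qed
  ultimately have "n * n \<le> (4 * t\<^sup>2 * R * norm ?g) * n"
    by (simp add: power2_eq_square algebra_simps)
  then have "n \<le> 4 * t\<^sup>2 * R * norm ?g"
    using R_nonneg unfolding n_def by (cases "d = 0") auto
  then show ?thesis unfolding n_def d_def q_def .
qed

lemma stationary_dist_bounds:
  assumes "stationary_dist Q \<pi>"
  shows "0 < \<pi> $ i" "\<pi> $ i \<le> 1"
proof -
  show "0 < \<pi> $ i" using assms unfolding stationary_dist_def by auto
  have "\<pi> $ i \<le> (\<Sum>j\<in>UNIV. \<pi> $ j)"
    by (rule member_le_sum) (use assms in \<open>auto simp: stationary_dist_def less_imp_le\<close>)
  then show "\<pi> $ i \<le> 1" using assms unfolding stationary_dist_def by simp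
qed

lemma norm_prior_minimizer_diff_mat_exp_le:
  fixes Q :: "real^'n^'n" and \<pi> p0 p :: "real^'n"
  defines "K \<equiv> entrywise_l1 Q" and "R \<equiv> \<Sum>i\<in>UNIV. 1 / \<pi> $ i"
  assumes Q: "rate_matrix Q" and \<pi>: "stationary_dist Q \<pi>" "reversible_wrt Q \<pi>"
    and p0: "p0 \<in> prob_simplex" and min: "is_prior_minimizer Q \<pi> p0 t p"
    and t: "0 < t" "t * (1 + K + 2 * K * R) \<le> 1"
  shows "norm (p - p0 v* mat_exp (t *\<^sub>R Q))
    \<le> (4 * R * norm (p0 v* Q v* Q) + K\<^sup>2 * norm p0) * t\<^sup>2"
proof -
  let ?euler = "p0 + t *\<^sub>R (p0 v* Q)"
  have "0 \<le> K" "0 \<le> R"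
    unfolding K_def R_def using stationary_dist_bounds(1)[OF \<pi>(1)]
    by (simp_all add: entrywise_l1_nonneg sum_nonneg less_imp_le)
  then have "0 \<le> t * K" "0 \<le> t * K * R"
    using t(1) by simp_all
  moreover have "t * (1 + K + 2 * K * R) = t + t * K + 2 * (t * K * R)"
    by (simp add: algebra_simps)
  ultimately have tK: "t * K \<le> 1" and tKR: "2 * t * K * R \<le> 1"
    using t by (linarith, simp add: mult.assoc)
  have "\<And>i. t * \<bar>Q $ i $ i\<bar> \<le> 1"
    using tK abs_entry_le_entrywise_l1[of Q] t(1) unfolding K_def
    by (meson mult_left_mono order_trans less_imp_le)
  then have "?euler \<in> prob_simplex"
    using euler_step_in_prob_simplex[OF Q p0] t(1) by simp
  then have "norm (p - ?euler) \<le> 4 * t\<^sup>2 * R * norm (p0 v* Q v* Q)"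
    using norm_prior_minimizer_diff_euler_step_le[OF \<pi>(2) stationary_dist_bounds[OF \<pi>(1)] _ min
        t(1)] tKR
    unfolding K_def R_def by blast
  moreover have "norm (p0 v* mat_exp (t *\<^sub>R Q) - p0 - t *\<^sub>R (p0 v* Q)) \<le> (t * K)\<^sup>2 * norm p0"
  proof -
    have "exp (t * K) - 1 - t * K \<le> (t * K)\<^sup>2"
      using exp_bound[of "t * K"] tK t(1) \<open>0 \<le> K\<close> by simp
    then show ?thesis
      using norm_vector_mat_exp_remainder_le[of t p0 Q] t(1) unfolding K_def
      by (meson mult_right_mono norm_ge_zero order_trans less_imp_le)
  qed
  ultimately show ?thesis
    using norm_triangle_ineq4[of "p - ?euler" "p0 v* mat_exp (t *\<^sub>R Q) - p0 - t *\<^sub>R (p0 v* Q)"]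
    by (simp add: algebra_simps power_mult_distrib)
qed

lemma tendsto_norm_div_at_right_0_of_quadratic_bound:
  fixes f :: "real \<Rightarrow> 'a::real_normed_vector"
  assumes "0 < b" and "\<And>t. 0 < t \<Longrightarrow> t < b \<Longrightarrow> norm (f t) \<le> C * t\<^sup>2"
  shows "((\<lambda>t. norm (f t) / t) \<longlongrightarrow> 0) (at_right 0)"
proof (rule tendsto_sandwich[where f = "\<lambda>_. 0" and h = "\<lambda>t. C * t"])
  show "\<forall>\<^sub>F t in at_right 0. 0 \<le> norm (f t) / t"
    unfolding eventually_at_right_field by (intro exI[of _ 1]) auto
  show "\<forall>\<^sub>F t in at_right 0. norm (f t) / t \<le> C * t"
    unfolding eventually_at_right_field using assms
    by (intro exI[of _ b]) (auto simp: divide_le_eq power2_eq_square mult_ac)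
  show "((\<lambda>t. C * t) \<longlongrightarrow> 0) (at_right 0)"
    by (rule tendsto_mult_right_zero) (rule tendsto_ident_at)
qed simp

theorem theorem3:
  fixes Q :: "real^'n^'n" and \<pi>inf p0 :: "real^'n" and P :: "real \<Rightarrow> real^'n"
  assumes "rate_matrix Q"
    and "irreducible_chain Q"
    and "stationary_dist Q \<pi>inf"
    and "reversible_wrt Q \<pi>inf"
    and "p0 \<in> prob_simplex"
    and "\<And>t. 0 < t \<Longrightarrow> is_prior_minimizer Q \<pi>inf p0 t (P t)"
  shows "((\<lambda>t. norm (P t - p0 v* mat_exp (t *\<^sub>R Q)) / t) \<longlongrightarrow> 0) (at_right 0)"
proof -
  define K where "K = entrywise_l1 Q"
  define R where "R = (\<Sum>i\<in>UNIV. 1 / \<pi>inf $ i)"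
  define b where "b = 1 / (1 + K + 2 * K * R)"
  have "0 \<le> K" "0 \<le> R"
    unfolding K_def R_def using stationary_dist_bounds(1)[OF assms(3)]
    by (simp_all add: entrywise_l1_nonneg sum_nonneg less_imp_le)
  then have "0 < 1 + K + 2 * K * R" by (simp add: add_pos_nonneg)
  then have "0 < b" unfolding b_def by simp
  have small: "t * (1 + K + 2 * K * R) \<le> 1" if "t < b" for t
    using that \<open>0 < 1 + K + 2 * K * R\<close> unfolding b_def by (simp add: less_divide_eq)
  show ?thesis
  proof (rule tendsto_norm_div_at_right_0_of_quadratic_bound[OF \<open>0 < b\<close>])
    show "norm (P t - p0 v* mat_exp (t *\<^sub>R Q))
        \<le> (4 * R * norm (p0 v* Q v* Q) + K\<^sup>2 * norm p0) * t\<^sup>2" if "0 < t" "t < b" for t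
      using norm_prior_minimizer_diff_mat_exp_le[OF assms(1,3,4,5) assms(6)[OF that(1)] that(1)
          small[OF that(2), unfolded K_def R_def]]
      unfolding K_def R_def by blast
  qed
qed

end
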